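(* For any set system $\Omega$ there is an integer $K_\Omega$ such that for all $k\ge K_\Omega$, the set system $k\Omega$ belongs to $\mathfrak{BC}$. That is, every complex zero $q$ of $H_{k\Omega}(q)$ satisfies $|q|\le1$.
   Context: A set system $\Omega$ on a finite set $E$ is a nonempty collection of subsets of $E$ (its faces). Let $d=d_\Omega$ be the maximum size of a face, let $f_i$ be the number of faces of size $i$, and let $F_\Omega(z)=\sum_{i=0}^df_iz^i$. The $H$-polynomial is $H_\Omega(q)=(1-q)^dF_\Omega\big(\frac{q}{1-q}\big)$. $\mathfrak{BC}$ is the class of set systems whose $H$-polynomial is Schur quasi-stable, i.e. has all complex zeros in $|q|\le1$. For a positive integer $k$, $k\Omega$ is the set system on $E\times\{1,\ldots,k\}$ defined as follows: $\{(e_1,i_1),\ldots,(e_r,i_r)\}$ is a face of $k\Omega$ if and only if $e_1,\ldots,e_r$ are pairwise distinct and $\{e_1,\ldots,e_r\}\in\Omega$. *)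

theory Defs
  imports Complex_Main "HOL-Computational_Algebra.Polynomial"
begin

definition set_system :: "'a set \<Rightarrow> 'a set set \<Rightarrow> bool" where
  "set_system E \<Omega> \<longleftrightarrow> finite E \<and> \<Omega> \<noteq> {} \<and> (\<forall>F\<in>\<Omega>. F \<subseteq> E)"

definition ss_dim :: "'a set set \<Rightarrow> nat" where
  "ss_dim \<Omega> = Max (card ` \<Omega>)"

definition ss_f :: "'a set set \<Rightarrow> nat \<Rightarrow> nat" where
  "ss_f \<Omega> i = card {F\<in>\<Omega>. card F = i}"

text \<open>H(q) = (1-q)^d F(q/(1-q)) = sum_i f_i q^i (1-q)^(d-i), as a complex polynomial.\<close>
definition H_poly :: "'a set set \<Rightarrow> complex poly" where
  "H_poly \<Omega> = (\<Sum>i\<le>ss_dim \<Omega>.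
      smult (of_nat (ss_f \<Omega> i)) ([:0, 1:] ^ i * [:1, -1:] ^ (ss_dim \<Omega> - i)))"

definition in_BC :: "'a set set \<Rightarrow> bool" where
  "in_BC \<Omega> \<longleftrightarrow> (\<forall>q. poly (H_poly \<Omega>) q = 0 \<longrightarrow> cmod q \<le> 1)"

definition mult_sys :: "nat \<Rightarrow> 'a set set \<Rightarrow> ('a \<times> nat) set set" where
  "mult_sys k \<Omega> = {S. S \<subseteq> UNIV \<times> {1..k} \<and> inj_on fst S \<and> fst ` S \<in> \<Omega>}"

end

theory Submission
  imports Defs "HOL-Library.FuncSet"
begin

text \<open>Multiplying all face counts \<open>f\<^sub>i\<close> by \<open>k\<^sup>i\<close> rescales the argument of \<open>F\<^sub>\<Omega>\<close>:
  \<open>H\<^sub>k\<^sub>\<Omega>(q) = (1 - q)\<^sup>d F\<^sub>\<Omega>(k q / (1 - q))\<close>. For \<open>|q| > 1\<close> the point \<open>k q / (1 - q)\<close>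
  has modulus greater than \<open>k / 2\<close>, so once \<open>k\<close> is large it lies outside the Cauchy bound
  for the zeros of \<open>F\<^sub>\<Omega>\<close>, whose leading coefficient \<open>f\<^sub>d\<close> is a positive integer.\<close>

lemma sum_lower_powers_lt:
  fixes c :: "nat \<Rightarrow> 'a::real_normed_field"
  assumes "c d \<noteq> 0" and "0 \<le> M" and "\<And>i. i < d \<Longrightarrow> norm (c i) \<le> M * norm (c d)"
    and "M + 1 \<le> norm x"
  shows "norm (\<Sum>i<d. c i * x^i) < norm (c d * x^d)"
proof -
  define r where "r = norm x"
  have "r \<ge> 1" using assms(2,4) by (simp add: r_def)
  have "norm (\<Sum>i<d. c i * x^i) \<le> (\<Sum>i<d. M * norm (c d) * r^i)"
    by (rule order_trans[OF norm_sum], rule sum_mono)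
       (auto simp: norm_mult norm_power r_def intro!: mult_right_mono assms(3))
  also have "\<dots> \<le> (\<Sum>i<d. (r - 1) * norm (c d) * r^i)"
    using assms(4) \<open>r \<ge> 1\<close> by (intro sum_mono mult_right_mono) (auto simp: r_def)
  also have "\<dots> = norm (c d) * (r^d - 1)"
    by (simp add: power_diff_1_eq sum_distrib_left mult_ac)
  also have "\<dots> < norm (c d * x^d)"
    using assms(1) by (simp add: norm_mult norm_power r_def)
  finally show ?thesis .
qed

lemma cauchy_bound_sum_nonzero:
  fixes c :: "nat \<Rightarrow> 'a::real_normed_field"
  assumes "c d \<noteq> 0" and "0 \<le> M" and "\<And>i. i < d \<Longrightarrow> norm (c i) \<le> M * norm (c d)"
    and "M + 1 \<le> norm x"
  shows "(\<Sum>i\<le>d. c i * x^i) \<noteq> 0"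
proof
  assume "(\<Sum>i\<le>d. c i * x^i) = 0"
  then have "c d * x^d = - (\<Sum>i<d. c i * x^i)"
    by (simp add: lessThan_Suc_atMost[symmetric] eq_neg_iff_add_eq_0 add.commute)
  then show False
    using sum_lower_powers_lt[of c d M x] assms by simp
qed

lemma sum_homogeneous_eq:
  fixes x y :: "'a::field"
  assumes "y \<noteq> 0"
  shows "(\<Sum>i\<le>d. c i * x^i * y^(d - i)) = y^d * (\<Sum>i\<le>d. c i * (x / y)^i)"
  unfolding sum_distrib_left
proof (rule sum.cong[OF refl])
  fix i assume "i \<in> {..d}"
  then have "y^d = y^(d - i) * y^i" by (simp flip: power_add)
  then show "c i * x^i * y^(d - i) = y^d * (c i * (x / y)^i)"
    using assms by (simp add: power_divide)
qed

lemma injective_lifts_eq_graphs: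
  "{S. S \<subseteq> UNIV \<times> A \<and> inj_on fst S \<and> fst ` S = F} = (\<lambda>g. (\<lambda>x. (x, g x)) ` F) ` (F \<rightarrow>\<^sub>E A)"
  (is "?L = ?R")
proof
  show "?R \<subseteq> ?L" by (auto simp: inj_on_def image_image)
next
  show "?L \<subseteq> ?R"
  proof
    fix S assume S: "S \<in> ?L"
    then have unique: "a = b" if "(x, a) \<in> S" "(x, b) \<in> S" for x a b
      using that inj_onD[of fst S "(x, a)" "(x, b)"] by auto
    define g where "g = (\<lambda>x\<in>F. THE a. (x, a) \<in> S)"
    have g: "(x, g x) \<in> S" if "x \<in> F" for x
    proof -
      obtain a where a: "(x, a) \<in> S" using S \<open>x \<in> F\<close> by force
      then have "(THE a. (x, a) \<in> S) = a"
        using unique by blast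
      then show ?thesis using a that by (simp add: g_def)
    qed
    have "S = (\<lambda>x. (x, g x)) ` F"
    proof (intro equalityI subsetI)
      fix p assume "p \<in> S"
      then show "p \<in> (\<lambda>x. (x, g x)) ` F"
        using S g unique[of "fst p" "snd p" "g (fst p)"] by force
    qed (use g in auto)
    moreover have "g \<in> F \<rightarrow>\<^sub>E A"
    proof (rule PiE_I)
      show "g x \<in> A" if "x \<in> F" for x using g[OF that] S by blast
    qed (simp add: g_def)
    ultimately show "S \<in> ?R" by blast
  qed
qed

lemma card_injective_lifts:
  assumes "finite F"
  shows "card {S. S \<subseteq> UNIV \<times> A \<and> inj_on fst S \<and> fst ` S = F} = card A ^ card F"
proof -
  have "inj_on (\<lambda>g. (\<lambda>x. (x, g x)) ` F) (F \<rightarrow>\<^sub>E A)"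
  proof (rule inj_onI)
    fix g h
    assume g: "g \<in> F \<rightarrow>\<^sub>E A" and h: "h \<in> F \<rightarrow>\<^sub>E A"
      and graphs: "(\<lambda>x. (x, g x)) ` F = (\<lambda>x. (x, h x)) ` F"
    show "g = h"
    proof (rule PiE_ext[OF g h])
      fix x assume "x \<in> F"
      then have "(x, g x) \<in> (\<lambda>x. (x, h x)) ` F" using graphs by blast
      then show "g x = h x" by blast
    qed
  qed
  then have "card {S. S \<subseteq> UNIV \<times> A \<and> inj_on fst S \<and> fst ` S = F} = card (F \<rightarrow>\<^sub>E A)"
    unfolding injective_lifts_eq_graphs by (rule card_image)
  also have "\<dots> = card A ^ card F"
    using assms by (simp add: card_PiE)
  finally show ?thesis .
qed

lemma norm_scaled_ratio_one_minus_ge: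
  fixes q :: "'a::real_normed_field"
  assumes "1 < norm q"
  shows "real k / 2 \<le> norm (of_nat k * q / (1 - q))"
proof -
  have "norm (1 - q) \<le> 1 + norm q" by (metis norm_one norm_triangle_ineq4)
  also have "\<dots> < 2 * norm q" using assms by simp
  finally have "norm (1 - q) < 2 * norm q" .
  moreover have "0 < norm (1 - q)" using assms by auto
  ultimately have "1 / 2 \<le> norm (q / (1 - q))" by (simp add: norm_divide field_simps)
  then have "real k * (1 / 2) \<le> real k * norm (q / (1 - q))" by (rule mult_left_mono) simp
  then show ?thesis by (simp add: norm_mult flip: times_divide_eq_right)
qed

lemma set_system_finite:
  assumes "set_system E \<Omega>"
  shows "finite \<Omega>"
  using assms unfolding set_system_def by (meson Pow_iff finite_Pow_iff rev_finite_subset subsetI)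

lemma set_system_finite_face:
  assumes "set_system E \<Omega>" and "F \<in> \<Omega>"
  shows "finite F"
  using assms unfolding set_system_def by (meson finite_subset)

lemma ss_f_dim_pos:
  assumes "set_system E \<Omega>"
  shows "0 < ss_f \<Omega> (ss_dim \<Omega>)"
proof -
  have "\<Omega> \<noteq> {}" using assms by (simp add: set_system_def)
  then have "ss_dim \<Omega> \<in> card ` \<Omega>"
    unfolding ss_dim_def using set_system_finite[OF assms] by (intro Max_in) auto
  then have "{F \<in> \<Omega>. card F = ss_dim \<Omega>} \<noteq> {}" by auto
  then show ?thesis
    unfolding ss_f_def using set_system_finite[OF assms] by (simp add: card_gt_0_iff)
qed

lemma card_fst_mult_sys:
  assumes "S \<in> mult_sys k \<Omega>"
  shows "card (fst ` S) = card S"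
  using assms by (simp add: mult_sys_def card_image)

lemma card_image_mult_sys:
  assumes "0 < k"
  shows "card ` mult_sys k \<Omega> = card ` \<Omega>"
proof (intro equalityI subsetI)
  fix n assume "n \<in> card ` mult_sys k \<Omega>"
  then obtain S where S: "S \<in> mult_sys k \<Omega>" and n: "n = card S" by blast
  have "fst ` S \<in> \<Omega>" using S by (simp add: mult_sys_def)
  moreover have "n = card (fst ` S)" using card_fst_mult_sys[OF S] n by simp
  ultimately show "n \<in> card ` \<Omega>" by (rule rev_image_eqI)
next
  fix n assume "n \<in> card ` \<Omega>"
  then obtain F where F: "F \<in> \<Omega>" and n: "n = card F" by blast
  have "F \<times> {1} \<subseteq> UNIV \<times> {1..k}" using assms by auto
  moreover have "inj_on fst (F \<times> {1::nat})" by (rule inj_onI) auto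
  moreover have "fst ` (F \<times> {1::nat}) = F" by simp
  ultimately have "F \<times> {1} \<in> mult_sys k \<Omega>" using F by (simp add: mult_sys_def)
  moreover have "n = card (F \<times> {1::nat})" using n by (simp add: card_cartesian_product)
  ultimately show "n \<in> card ` mult_sys k \<Omega>" by (rule rev_image_eqI)
qed

lemma ss_dim_mult_sys:
  assumes "0 < k"
  shows "ss_dim (mult_sys k \<Omega>) = ss_dim \<Omega>"
  unfolding ss_dim_def card_image_mult_sys[OF assms] ..

lemma ss_f_mult_sys:
  assumes "set_system E \<Omega>"
  shows "ss_f (mult_sys k \<Omega>) i = k ^ i * ss_f \<Omega> i"
proof -
  let ?faces_over = "\<lambda>F. {S. S \<subseteq> UNIV \<times> {1..k} \<and> inj_on fst S \<and> fst ` S = F}"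
  let ?I = "{F \<in> \<Omega>. card F = i}"
  have card_faces_over: "card (?faces_over F) = k ^ i" if "F \<in> ?I" for F
    using that card_injective_lifts[of F "{1..k}"] set_system_finite_face[OF assms] by simp
  have "{S \<in> mult_sys k \<Omega>. card S = i} = (\<Union>F\<in>?I. ?faces_over F)"
    unfolding mult_sys_def by (auto simp: card_image)
  then have "ss_f (mult_sys k \<Omega>) i = card (\<Union>F\<in>?I. ?faces_over F)"
    by (simp add: ss_f_def)
  also have "\<dots> = (\<Sum>F\<in>?I. card (?faces_over F))"
  proof (rule card_UN_disjoint)
    show "finite ?I" using set_system_finite[OF assms] by simp
    show "\<forall>F\<in>?I. finite (?faces_over F)"
      unfolding injective_lifts_eq_graphs using set_system_finite_face[OF assms]
      by (auto intro: finite_PiE)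
  qed auto
  also have "\<dots> = (\<Sum>F\<in>?I. k ^ i)"
    using card_faces_over by (rule sum.cong[OF refl])
  also have "\<dots> = k ^ i * ss_f \<Omega> i"
    by (simp add: ss_f_def)
  finally show ?thesis .
qed

lemma poly_H_poly:
  "poly (H_poly \<Omega>) q = (\<Sum>i\<le>ss_dim \<Omega>. of_nat (ss_f \<Omega> i) * q^i * (1 - q)^(ss_dim \<Omega> - i))"
  by (simp add: H_poly_def poly_sum mult.assoc)

lemma poly_H_poly_mult_sys:
  assumes "set_system E \<Omega>" and "0 < k" and "q \<noteq> 1"
  shows "poly (H_poly (mult_sys k \<Omega>)) q
    = (1 - q)^ss_dim \<Omega> * (\<Sum>i\<le>ss_dim \<Omega>. of_nat (ss_f \<Omega> i) * (of_nat k * q / (1 - q))^i)"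
proof -
  have "poly (H_poly (mult_sys k \<Omega>)) q
      = (\<Sum>i\<le>ss_dim \<Omega>. of_nat (ss_f \<Omega> i) * (of_nat k * q)^i * (1 - q)^(ss_dim \<Omega> - i))"
    unfolding poly_H_poly ss_dim_mult_sys[OF assms(2)] ss_f_mult_sys[OF assms(1)]
    by (simp add: power_mult_distrib mult_ac)
  also have "\<dots> = (1 - q)^ss_dim \<Omega> * (\<Sum>i\<le>ss_dim \<Omega>. of_nat (ss_f \<Omega> i) * (of_nat k * q / (1 - q))^i)"
    using assms(3) by (intro sum_homogeneous_eq) simp
  finally show ?thesis .
qed

lemma in_BC_mult_sys:
  assumes "set_system E \<Omega>" and "2 * (\<Sum>i\<le>ss_dim \<Omega>. ss_f \<Omega> i) + 2 \<le> k"
  shows "in_BC (mult_sys k \<Omega>)"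
  unfolding in_BC_def
proof (intro allI impI)
  fix q :: complex
  assume root: "poly (H_poly (mult_sys k \<Omega>)) q = 0"
  show "cmod q \<le> 1"
  proof (rule ccontr)
    assume "\<not> cmod q \<le> 1"
    then have q: "1 < cmod q" by simp
    then have "q \<noteq> 1" by auto
    define d where "d = ss_dim \<Omega>"
    define M where "M = real (\<Sum>i\<le>d. ss_f \<Omega> i)"
    define x where "x = of_nat k * q / (1 - q)"
    have "M + 1 \<le> real k / 2"
      using of_nat_mono[OF assms(2), where 'a = real] by (simp add: M_def d_def)
    also have "\<dots> \<le> cmod x"
      unfolding x_def using q by (rule norm_scaled_ratio_one_minus_ge)
    finally have x: "M + 1 \<le> cmod x" .
    have fd: "0 < ss_f \<Omega> d"
      using ss_f_dim_pos[OF assms(1)] by (simp add: d_def)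
    have M: "0 \<le> M" by (simp add: M_def sum_nonneg)
    have coeff_bound: "cmod (of_nat (ss_f \<Omega> i)) \<le> M * cmod (of_nat (ss_f \<Omega> d))"
      if "i \<le> d" for i
    proof -
      have "real (ss_f \<Omega> i) \<le> M"
        unfolding M_def of_nat_le_iff using that by (intro member_le_sum) auto
      also have "\<dots> \<le> M * real (ss_f \<Omega> d)"
        using mult_left_mono[of 1 "real (ss_f \<Omega> d)" M] fd M by simp
      finally show ?thesis by simp
    qed
    have "(\<Sum>i\<le>d. of_nat (ss_f \<Omega> i) * x^i) \<noteq> (0::complex)"
      using fd M x coeff_bound by (intro cauchy_bound_sum_nonzero[where M = M]) auto
    moreover have "poly (H_poly (mult_sys k \<Omega>)) q = (1 - q)^d * (\<Sum>i\<le>d. of_nat (ss_f \<Omega> i) * x^i)"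
      using poly_H_poly_mult_sys[OF assms(1) _ \<open>q \<noteq> 1\<close>] assms(2)
      by (simp add: d_def x_def)
    ultimately show False
      using root \<open>q \<noteq> 1\<close> by simp
  qed
qed

theorem proposition6p2:
  fixes E :: "'a set" and \<Omega> :: "'a set set"
  assumes "set_system E \<Omega>"
  shows "\<exists>K::nat. \<forall>k::nat. 0 < k \<and> K \<le> k \<longrightarrow> in_BC (mult_sys k \<Omega>)"
  using in_BC_mult_sys[OF assms] by blast

end
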